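(* Let $k\ge 2$ be an integer, $p$ a prime and $a$ a positive integer, and let $n=p^a$. If $a$ is $k$-perfect (i.e. $\sigma(a)=ka$), then $n$ is $k$-multiplicatively $e$-perfect, i.e. $T_e(n)=n^k$. If $a$ is $k$-superperfect (i.e. $\sigma(\sigma(a))=ka$), then $n$ is $k$-multiplicatively $e$-superperfect, i.e. $T_e(T_e(n))=n^k$.
   Context: $\sigma(m)$ is the sum of the positive divisors of $m$. For $n=p_1^{a_1}\cdots p_r^{a_r}>1$ (prime factorization), a divisor $d=p_1^{b_1}\cdots p_r^{b_r}$ of $n$ is an exponential divisor ($e$-divisor) if $b_i\mid a_i$ for all $i$; $T_e(n)$ denotes the product of all $e$-divisors of $n$. *)

theory Defs
  imports "HOL-Computational_Algebra.Primes"
begin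

definition sigma :: "nat \<Rightarrow> nat" where
  "sigma m = (\<Sum>d\<in>{d. d dvd m}. d)"

text \<open>Exponential divisors of n: divisors d of n such that for every prime p of n,
  the exponent of p in d divides the exponent of p in n (0 dvd a only if a = 0,
  so every prime of n occurs in d).\<close>
definition e_divisors :: "nat \<Rightarrow> nat set" where
  "e_divisors n = {d. d dvd n \<and> (\<forall>p\<in>prime_factors n. multiplicity p d dvd multiplicity p n)}"

definition T_e :: "nat \<Rightarrow> nat" where
  "T_e n = (\<Prod>d\<in>e_divisors n. d)"

end

theory Submission
  imports Defs
begin

text \<open>The e-divisors of \<open>p ^ a\<close> are the powers \<open>p ^ b\<close> with \<open>b dvd a\<close>, so
  \<open>T_e (p ^ a) = p ^ sigma a\<close>. Hence \<open>sigma a = k * a\<close> gives \<open>T_e n = p ^ (k * a) = n ^ k\<close>,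
  and applying the formula once more to \<open>p ^ sigma a\<close> gives
  \<open>T_e (T_e n) = p ^ sigma (sigma a)\<close>, which settles the superperfect case.\<close>

lemma e_divisors_prime_power:
  assumes "prime (p::nat)" "a > 0"
  shows "e_divisors (p ^ a) = (\<lambda>b. p ^ b) ` {b. b dvd a}"
proof -
  have prime_factors: "prime_factors (p ^ a) = {p}"
    using assms by (simp add: prime_factorization_prime_power)
  have multiplicity: "multiplicity p (p ^ b) = b" for b
    using assms(1) by (simp add: multiplicity_prime_power)
  show ?thesis
  proof (intro set_eqI iffI)
    fix d assume "d \<in> e_divisors (p ^ a)"
    then have d: "d dvd p ^ a" "multiplicity p d dvd a"
      unfolding e_divisors_def prime_factors by (auto simp: multiplicity)
    from d(1) obtain b where "d = p ^ b"
      using assms(1) by (metis divides_primepow normalize_nat_def id_apply)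
    then show "d \<in> (\<lambda>b. p ^ b) ` {b. b dvd a}"
      using d(2) multiplicity by auto
  next
    fix d assume "d \<in> (\<lambda>b. p ^ b) ` {b. b dvd a}"
    then obtain b where b: "b dvd a" "d = p ^ b" by auto
    then have "d dvd p ^ a"
      using assms(2) by (simp add: dvd_imp_le le_imp_power_dvd)
    then show "d \<in> e_divisors (p ^ a)"
      unfolding e_divisors_def prime_factors using b multiplicity by auto
  qed
qed

lemma T_e_prime_power:
  assumes "prime (p::nat)" "a > 0"
  shows "T_e (p ^ a) = p ^ sigma a"
proof -
  have "inj_on (\<lambda>b. p ^ b) {b. b dvd a}"
    using prime_gt_1_nat[OF assms(1)] by (auto intro!: inj_onI simp: power_inject_exp)
  then have "T_e (p ^ a) = (\<Prod>b\<in>{b. b dvd a}. p ^ b)"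
    unfolding T_e_def e_divisors_prime_power[OF assms] by (simp add: prod.reindex)
  also have "\<dots> = p ^ sigma a"
    unfolding sigma_def by (simp add: power_sum)
  finally show ?thesis .
qed

lemma sigma_ge_self:
  assumes "m > 0"
  shows "m \<le> sigma m"
  unfolding sigma_def using assms by (intro member_le_sum) auto

theorem mainTheorem3:
  fixes k p a n :: nat
  assumes "k \<ge> 2" and "prime p" and "a > 0" and "n = p ^ a"
  shows "(sigma a = k * a \<longrightarrow> T_e n = n ^ k) \<and>
         (sigma (sigma a) = k * a \<longrightarrow> T_e (T_e n) = n ^ k)"
proof -
  have T_e_n: "T_e n = p ^ sigma a"
    using T_e_prime_power[OF assms(2,3)] assms(4) by simp
  have "sigma a > 0"
    using sigma_ge_self[OF assms(3)] assms(3) by simp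
  then have "T_e (T_e n) = p ^ sigma (sigma a)"
    using T_e_n T_e_prime_power[OF assms(2)] by simp
  moreover have "n ^ k = p ^ (k * a)"
    using assms(4) by (simp add: power_mult[symmetric] mult.commute)
  ultimately show ?thesis
    using T_e_n by simp
qed

end
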